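(* The pca $\mathcal{E}$ of c.e. sets does not embed in $\mathcal{K}_2^{\mathrm{eff}}$.
   Context: A pca is a set with a partial binary application operation containing distinct $\mathrm{s},\mathrm{k}$ with $\mathrm{k}ab\downarrow=a$, $\mathrm{s}ab\downarrow$, $\mathrm{s}abc\simeq(ac)(bc)$. An embedding of pcas is an injective map $f$ with: if $ab$ is defined then $f(a)f(b)$ is defined and equals $f(ab)$. $\mathcal{E}$: the c.e. subsets of $\omega$ with application $A\cdot B=\{n:\exists u\,(\langle n,u\rangle\in A\wedge D_u\subseteq B)\}$, where $\langle\cdot,\cdot\rangle$ is a bijective computable pairing with $\langle 0,0\rangle=0$ and $D_u$ is the finite set with canonical code $u$. $\mathcal{K}_2^{\mathrm{eff}}$: elements are the total computable functions $g:\omega\to\omega$, with $g\cdot h$ the function $n\mapsto\Phi^{g\oplus h}_{g(0)}(n)$ ($\Phi_e$ the $e$-th Turing functional, $(g\oplus h)(2n)=g(n)$, $(g\oplus h)(2n+1)=h(n)$), defined if and only if this function is total. *)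

theory Defs
  imports Main "HOL-Library.Countable" "HOL-Library.Nat_Bijection"
begin

datatype prog =
    Zero
  | Succ
  | Proj nat
  | Orc                      \<comment> \<open>unary oracle call: x \<mapsto> \<alpha> x\<close>
  | Comp prog "prog list"
  | PrimRec prog prog
  | Mu prog

instance prog :: countable by countable_datatype

inductive eval :: "(nat \<Rightarrow> nat) \<Rightarrow> prog \<Rightarrow> nat list \<Rightarrow> nat \<Rightarrow> bool" for \<alpha> where
  ev_zero: "eval \<alpha> Zero xs 0"
| ev_succ: "eval \<alpha> Succ (x # xs) (Suc x)"
| ev_proj: "i < length xs \<Longrightarrow> eval \<alpha> (Proj i) xs (xs ! i)"
| ev_orc:  "eval \<alpha> Orc (x # xs) (\<alpha> x)"
| ev_comp: "list_all2 (\<lambda>g y. eval \<alpha> g xs y) gs ys \<Longrightarrow> eval \<alpha> f ys z \<Longrightarrow> eval \<alpha> (Comp f gs) xs z"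
| ev_pr0:  "eval \<alpha> f xs y \<Longrightarrow> eval \<alpha> (PrimRec f g) (0 # xs) y"
| ev_prS:  "eval \<alpha> (PrimRec f g) (n # xs) r \<Longrightarrow> eval \<alpha> g (n # r # xs) y
            \<Longrightarrow> eval \<alpha> (PrimRec f g) (Suc n # xs) y"
| ev_mu:   "eval \<alpha> f (y # xs) 0 \<Longrightarrow> (\<forall>z<y. \<exists>v. v \<noteq> 0 \<and> eval \<alpha> f (z # xs) v)
            \<Longrightarrow> eval \<alpha> (Mu f) xs y"

definition Phi :: "nat \<Rightarrow> (nat \<Rightarrow> nat) \<Rightarrow> nat \<Rightarrow> nat \<Rightarrow> bool" where
  "Phi e \<alpha> n y \<longleftrightarrow> eval \<alpha> (from_nat e) [n] y"

definition ce_sets :: "nat set set" where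
  "ce_sets = {A. \<exists>p. A = {n. \<exists>y. eval (\<lambda>_. 0) p [n] y}}"

definition Dcan :: "nat \<Rightarrow> nat set" where
  "Dcan u = {i. bit u i}"

definition E_app :: "nat set \<Rightarrow> nat set \<Rightarrow> nat set" where
  "E_app A B = {n. \<exists>u. prod_encode (n, u) \<in> A \<and> Dcan u \<subseteq> B}"

definition K2eff :: "(nat \<Rightarrow> nat) set" where
  "K2eff = {g. \<exists>p. \<forall>n. eval (\<lambda>_. 0) p [n] (g n)}"

definition join :: "(nat \<Rightarrow> nat) \<Rightarrow> (nat \<Rightarrow> nat) \<Rightarrow> nat \<Rightarrow> nat" where
  "join g h m = (if even m then g (m div 2) else h (m div 2))"

definition K2app :: "(nat \<Rightarrow> nat) \<Rightarrow> (nat \<Rightarrow> nat) \<Rightarrow> (nat \<Rightarrow> nat) \<Rightarrow> bool" where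
  "K2app g h k \<longleftrightarrow> (\<forall>n. Phi (g 0) (join g h) n (k n))"

definition embeds_E_K2eff :: "(nat set \<Rightarrow> (nat \<Rightarrow> nat)) \<Rightarrow> bool" where
  "embeds_E_K2eff f \<longleftrightarrow>
     inj_on f ce_sets \<and> f ` ce_sets \<subseteq> K2eff \<and>
     (\<forall>A\<in>ce_sets. \<forall>B\<in>ce_sets. E_app A B \<in> ce_sets \<longrightarrow> K2app (f A) (f B) (f (E_app A B)))"

end

theory Submission
  imports Defs
begin

text \<open>Let \<open>f\<close> embed the c.e. sets into \<open>K2eff\<close>. For \<open>S = {\<langle>l + 1, {l}\<rangle>}\<close> we have \<open>S \<cdot> {l} = {l + 1}\<close>,
  so \<open>f {l + 1} = f S \<cdot> f {l}\<close>: every \<open>f {l}\<close> arises from \<open>f {0}\<close> by \<open>l\<close> applications of \<open>f S\<close>,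
  and \<open>(l, n) \<mapsto> f {l} n\<close> is computable. Now let \<open>W\<close> be c.e. with non-c.e. complement and
  \<open>P = {\<langle>0, {d}\<rangle> | d \<in> W}\<close>, so that \<open>P \<cdot> {d}\<close> is \<open>{0}\<close> or \<open>{}\<close> according as \<open>d \<in> W\<close>. At a point
  \<open>k\<close> where \<open>f {0}\<close> and \<open>f {}\<close> differ, the value \<open>(f P \<cdot> f {d}) k\<close> then tells whether \<open>d \<in> W\<close>,
  and the complement of \<open>W\<close> becomes c.e.

  To see that \<open>(f P \<cdot> f {d}) k\<close> is computable uniformly in \<open>d\<close>, the nested oracle computations are
  flattened into certificates: finite lists of evaluation facts, each obtained by one rule of
  \<open>eval\<close> from earlier ones, where a query to \<open>f {l}\<close> is answered by an earlier fact about the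
  computation of \<open>f S \<cdot> f {l - 1}\<close>. Validity of a certificate is decidable, so the existence of
  one is a c.e. condition.\<close>

lemma list_all2_unique:
  assumes "list_all2 (\<lambda>a b. P a b \<and> (\<forall>b'. Q a b' \<longrightarrow> b = b')) as bs"
    and "list_all2 Q as bs'"
  shows "bs = bs'"
  using assms
proof (induction as arbitrary: bs bs')
  case Nil
  then show ?case by simp
next
  case (Cons a as)
  then obtain b bs0 where "bs = b # bs0" by (cases bs) auto
  moreover obtain b' bs0' where "bs' = b' # bs0'" using Cons.prems by (cases bs') auto
  ultimately show ?case using Cons by auto
qed

lemma eval_det: "eval \<alpha> p xs y \<Longrightarrow> eval \<alpha> p xs y' \<Longrightarrow> y = y'"
proof (induction arbitrary: y' rule: eval.induct)
  case (ev_zero xs)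
  from ev_zero.prems show ?case by (cases rule: eval.cases) auto
next
  case (ev_succ x xs)
  from ev_succ.prems show ?case by (cases rule: eval.cases) auto
next
  case (ev_proj i xs)
  from ev_proj.prems show ?case by (cases rule: eval.cases) auto
next
  case (ev_orc x xs)
  from ev_orc.prems show ?case by (cases rule: eval.cases) auto
next
  case (ev_comp xs gs ys f z)
  from ev_comp.prems obtain ys' where ys': "list_all2 (\<lambda>g. eval \<alpha> g xs) gs ys'"
    and f: "eval \<alpha> f ys' y'"
    by (cases rule: eval.cases) auto
  have "ys = ys'"
    by (rule list_all2_unique[OF _ ys']) (use ev_comp.IH(1) in \<open>auto elim: list_all2_mono\<close>)
  then show ?case using ev_comp f by auto
next
  case (ev_pr0 f xs y g)
  from ev_pr0.prems show ?case by (cases rule: eval.cases) (use ev_pr0.IH in auto)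
next
  case (ev_prS f g n xs r y)
  from ev_prS.prems obtain r' where "eval \<alpha> (PrimRec f g) (n # xs) r'" "eval \<alpha> g (n # r' # xs) y'"
    by (cases rule: eval.cases) auto
  then show ?case using ev_prS.IH by auto
next
  case (ev_mu f y xs)
  from ev_mu.prems have zero: "eval \<alpha> f (y' # xs) 0"
    and below: "\<forall>z<y'. \<exists>v. v \<noteq> 0 \<and> eval \<alpha> f (z # xs) v"
    by (cases rule: eval.cases; auto)+
  show ?case
  proof (rule ccontr)
    assume "y \<noteq> y'"
    then consider "y < y'" | "y' < y" by linarith
    then show False
    proof cases
      case 1
      then obtain v where "v \<noteq> 0" "eval \<alpha> f (y # xs) v" using below by auto
      then show False using ev_mu.IH(1) by auto
    next
      case 2
      then obtain v where "v \<noteq> 0" "\<forall>w. eval \<alpha> f (y' # xs) w \<longrightarrow> v = w"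
        using ev_mu.IH(2) by auto
      then show False using zero by auto
    qed
  qed
qed

section \<open>Computable functionals\<close>

definition computable :: "nat \<Rightarrow> ((nat \<Rightarrow> nat) \<Rightarrow> nat) \<Rightarrow> bool" where
  "computable m F \<longleftrightarrow> (\<exists>p. \<forall>e. eval (\<lambda>_. 0) p (map e [0..<m]) (F e))"

fun const_prog :: "nat \<Rightarrow> prog" where
  "const_prog 0 = Zero"
| "const_prog (Suc c) = Comp Succ [const_prog c]"

lemma eval_const_prog: "eval \<alpha> (const_prog c) xs c"
proof (induction c)
  case 0
  then show ?case by (simp add: ev_zero)
next
  case (Suc c)
  then have "list_all2 (\<lambda>g. eval \<alpha> g xs) [const_prog c] [c]" by simp
  then show ?case by (auto intro: ev_comp ev_succ)
qed

lemma eval_Proj_map: "j < m \<Longrightarrow> eval \<alpha> (Proj j) (map e [0..<m]) (e j)"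
  using ev_proj[of j "map e [0..<m]" \<alpha>] by simp

lemma computable_cong: "computable m G \<Longrightarrow> (\<And>e. F e = G e) \<Longrightarrow> computable m F"
  unfolding computable_def by simp

lemma computable_const: "computable m (\<lambda>e. c)"
  unfolding computable_def by (rule exI[of _ "const_prog c"]) (simp add: eval_const_prog)

lemma computable_proj: "j < m \<Longrightarrow> computable m (\<lambda>e. e j)"
  unfolding computable_def by (blast intro: eval_Proj_map)

lemma computable_comp:
  assumes "computable k G" and "\<forall>i<k. computable m (Fs i)"
  shows "computable m (\<lambda>e. G (\<lambda>i. Fs i e))"
proof -
  obtain pG where pG: "\<forall>e. eval (\<lambda>_. 0) pG (map e [0..<k]) (G e)"
    using assms(1) unfolding computable_def by blast
  have "\<forall>i<k. \<exists>p. \<forall>e. eval (\<lambda>_. 0) p (map e [0..<m]) (Fs i e)"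
    using assms(2) unfolding computable_def by blast
  then obtain pF where pF: "\<forall>i<k. \<forall>e. eval (\<lambda>_. 0) (pF i) (map e [0..<m]) (Fs i e)" by metis
  show ?thesis unfolding computable_def
  proof (intro exI allI)
    fix e
    have "list_all2 (\<lambda>g. eval (\<lambda>_. 0) g (map e [0..<m])) (map pF [0..<k]) (map (\<lambda>i. Fs i e) [0..<k])"
      using pF by (auto simp: list_all2_conv_all_nth)
    then show "eval (\<lambda>_. 0) (Comp pG (map pF [0..<k])) (map e [0..<m]) (G (\<lambda>i. Fs i e))"
      using pG by (blast intro: ev_comp)
  qed
qed

lemma computable_reindex:
  assumes "computable k G" and "\<forall>i<k. \<sigma> i < m"
  shows "computable m (\<lambda>e. G (\<lambda>i. e (\<sigma> i)))"
  using computable_comp[OF assms(1), of m "\<lambda>i e. e (\<sigma> i)"] assms(2) computable_proj by blast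

lemma computable_shift: "computable m A \<Longrightarrow> computable (Suc m) (\<lambda>e. A (\<lambda>j. e (Suc j)))"
  using computable_reindex[of m A Suc "Suc m"] by simp

lemma computable_unary:
  "computable 1 (\<lambda>e. g (e 0)) \<Longrightarrow> computable m A \<Longrightarrow> computable m (\<lambda>e. g (A e))"
  using computable_comp[of 1 "\<lambda>e. g (e 0)" m "\<lambda>i. A"] by simp

lemma computable_binary:
  "computable 2 (\<lambda>e. g (e 0) (e 1)) \<Longrightarrow> computable m A \<Longrightarrow> computable m B
    \<Longrightarrow> computable m (\<lambda>e. g (A e) (B e))"
  using computable_comp[of 2 "\<lambda>e. g (e 0) (e 1)" m "\<lambda>i. if i = 0 then A else B"]
  by (simp add: less_2_cases_iff)

lemma computable_K2eff: "g \<in> K2eff \<Longrightarrow> computable m A \<Longrightarrow> computable m (\<lambda>e. g (A e))"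
  by (rule computable_unary) (auto simp: K2eff_def computable_def)

lemma map_upt_Suc_Suc: "map f [0..<Suc (Suc m)] = f 0 # f 1 # map (\<lambda>j. f (Suc (Suc j))) [0..<m]"
  by (simp add: map_upt_Suc del: upt_Suc)

lemma computable_rec_nat:
  assumes "computable m N" and "computable m B"
    and "computable (Suc (Suc m)) (\<lambda>e. S (e 0) (e 1) (\<lambda>j. e (Suc (Suc j))))"
  shows "computable m (\<lambda>e. rec_nat (B e) (\<lambda>k r. S k r e) (N e))"
proof -
  obtain pN where pN: "\<forall>e. eval (\<lambda>_. 0) pN (map e [0..<m]) (N e)"
    using assms(1) unfolding computable_def by blast
  obtain pB where pB: "\<forall>e. eval (\<lambda>_. 0) pB (map e [0..<m]) (B e)"
    using assms(2) unfolding computable_def by blast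
  obtain pS where pS: "\<forall>e. eval (\<lambda>_. 0) pS (map e [0..<Suc (Suc m)]) (S (e 0) (e 1) (\<lambda>j. e (Suc (Suc j))))"
    using assms(3) unfolding computable_def by blast
  have rec: "eval (\<lambda>_. 0) (PrimRec pB pS) (n # map e [0..<m]) (rec_nat (B e) (\<lambda>k r. S k r e) n)"
    for n e
  proof (induction n)
    case 0
    then show ?case using pB by (simp add: ev_pr0)
  next
    case (Suc n)
    let ?r = "rec_nat (B e) (\<lambda>k r. S k r e) n"
    define e' where "e' = (\<lambda>j. if j = 0 then n else if j = 1 then ?r else e (j - 2))"
    have "map e' [0..<Suc (Suc m)] = n # ?r # map e [0..<m]"
      unfolding map_upt_Suc_Suc by (simp add: e'_def)
    moreover have "(\<lambda>j. e' (Suc (Suc j))) = e"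
      by (simp add: e'_def)
    ultimately have "eval (\<lambda>_. 0) pS (n # ?r # map e [0..<m]) (S n ?r e)"
      using pS[rule_format, of e'] by (simp add: e'_def)
    then show ?case using Suc by (simp add: ev_prS)
  qed
  show ?thesis unfolding computable_def
  proof (intro exI allI)
    fix e
    have "list_all2 (\<lambda>g. eval (\<lambda>_. 0) g (map e [0..<m])) (pN # map Proj [0..<m]) (N e # map e [0..<m])"
      using pN by (auto simp: list_all2_conv_all_nth nth_Cons' intro: eval_Proj_map)
    then show "eval (\<lambda>_. 0) (Comp (PrimRec pB pS) (pN # map Proj [0..<m])) (map e [0..<m])
        (rec_nat (B e) (\<lambda>k r. S k r e) (N e))"
      using rec by (rule ev_comp)
  qed
qed

lemma computable_Suc: "computable m A \<Longrightarrow> computable m (\<lambda>e. Suc (A e))"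
  by (rule computable_unary) (auto simp: computable_def intro: ev_succ)

lemma computable_if:
  assumes "computable m (\<lambda>e. of_bool (P e))" "computable m A" "computable m B"
  shows "computable m (\<lambda>e. if P e then A e else B e)"
proof -
  have "computable (Suc (Suc m)) (\<lambda>e. A (\<lambda>j. e (Suc (Suc j))))"
    using computable_reindex[OF assms(2), of "\<lambda>j. Suc (Suc j)"] by simp
  then have "computable m (\<lambda>e. rec_nat (B e) (\<lambda>k r. A e) (of_bool (P e)))"
    by (rule computable_rec_nat[OF assms(1) assms(3)])
  then show ?thesis by (rule computable_cong) simp
qed

lemma computable_eq0:
  assumes "computable m A"
  shows "computable m (\<lambda>e. of_bool (A e = 0))"
proof -
  have "computable 1 (\<lambda>e. rec_nat 1 (\<lambda>k r. 0) (e 0))"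
    by (rule computable_rec_nat[OF computable_proj computable_const computable_const]) simp
  then have "computable 1 (\<lambda>e. of_bool (e 0 = 0))"
    by (rule computable_cong) (case_tac "e 0"; simp)
  from computable_unary[OF this assms] show ?thesis .
qed

lemma computable_add:
  assumes "computable m A" "computable m B"
  shows "computable m (\<lambda>e. A e + B e)"
proof -
  have r: "computable 2 (\<lambda>e. rec_nat (e 0) (\<lambda>k r. Suc r) (e 1))"
    by (intro computable_rec_nat computable_proj computable_Suc) simp_all
  have eq: "rec_nat a (\<lambda>k r. Suc r) b = a + b" for a b :: nat by (induction b) auto
  have "computable 2 (\<lambda>e. e 0 + e 1)" by (rule computable_cong[OF r]) (rule eq[symmetric])
  from computable_binary[OF this assms] show ?thesis .
qed

lemma computable_diff:
  assumes "computable m A" "computable m B"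
  shows "computable m (\<lambda>e. A e - B e)"
proof -
  have "computable 1 (\<lambda>e. rec_nat 0 (\<lambda>k r. k) (e 0))"
    by (intro computable_rec_nat computable_proj computable_const) simp_all
  then have pred: "computable 1 (\<lambda>e. e 0 - 1)"
    by (rule computable_cong) (case_tac "e 0"; simp)
  have r: "computable 2 (\<lambda>e. rec_nat (e 0) (\<lambda>k r. r - 1) (e 1))"
    by (intro computable_rec_nat computable_proj computable_unary[OF pred]) simp_all
  have eq: "rec_nat a (\<lambda>k r. r - 1) b = a - b" for a b :: nat by (induction b) auto
  have "computable 2 (\<lambda>e. e 0 - e 1)" by (rule computable_cong[OF r]) (rule eq[symmetric])
  from computable_binary[OF this assms] show ?thesis .
qed

lemma computable_mult:
  assumes "computable m A" "computable m B"
  shows "computable m (\<lambda>e. A e * B e)"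
proof -
  have r: "computable 2 (\<lambda>e. rec_nat 0 (\<lambda>k r. r + e 0) (e 1))"
    by (intro computable_rec_nat computable_proj computable_const computable_add) simp_all
  have eq: "rec_nat 0 (\<lambda>k r. r + a) b = a * b" for a b :: nat by (induction b) auto
  have "computable 2 (\<lambda>e. e 0 * e 1)" by (rule computable_cong[OF r]) (rule eq[symmetric])
  from computable_binary[OF this assms] show ?thesis .
qed

lemma computable_not:
  "computable m (\<lambda>e. of_bool (P e)) \<Longrightarrow> computable m (\<lambda>e. of_bool (\<not> P e))"
  by (drule computable_eq0) (erule computable_cong; simp)

lemma computable_conj:
  "computable m (\<lambda>e. of_bool (P e)) \<Longrightarrow> computable m (\<lambda>e. of_bool (Q e))
    \<Longrightarrow> computable m (\<lambda>e. of_bool (P e \<and> Q e))"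
  by (drule (1) computable_mult) (erule computable_cong; simp)

lemma computable_disj:
  "computable m (\<lambda>e. of_bool (P e)) \<Longrightarrow> computable m (\<lambda>e. of_bool (Q e))
    \<Longrightarrow> computable m (\<lambda>e. of_bool (P e \<or> Q e))"
  by (drule (1) computable_add, drule computable_eq0, drule computable_not) (erule computable_cong; simp)

lemma computable_imp:
  "computable m (\<lambda>e. of_bool (P e)) \<Longrightarrow> computable m (\<lambda>e. of_bool (Q e))
    \<Longrightarrow> computable m (\<lambda>e. of_bool (P e \<longrightarrow> Q e))"
  by (drule computable_not, drule (1) computable_disj) (erule computable_cong; simp)

lemma computable_eq:
  assumes "computable m A" "computable m B"
  shows "computable m (\<lambda>e. of_bool (A e = B e))"
proof -
  have "computable m (\<lambda>e. of_bool ((A e - B e) + (B e - A e) = 0))"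
    by (intro computable_eq0 computable_add computable_diff assms)
  then show ?thesis by (rule computable_cong) auto
qed

lemma computable_iff:
  "computable m (\<lambda>e. of_bool (P e)) \<Longrightarrow> computable m (\<lambda>e. of_bool (Q e))
    \<Longrightarrow> computable m (\<lambda>e. of_bool (P e = Q e))"
  by (drule (1) computable_eq) (erule computable_cong; simp)

lemma computable_less:
  assumes "computable m A" "computable m B"
  shows "computable m (\<lambda>e. of_bool (A e < B e))"
proof -
  have "computable m (\<lambda>e. of_bool (\<not> B e - A e = 0))"
    by (intro computable_not computable_eq0 computable_diff assms)
  then show ?thesis by (rule computable_cong) auto
qed

lemma computable_ignore_arg1:
  assumes "computable (Suc m) (\<lambda>e. F (e 0) (\<lambda>j. e (Suc j)))"
  shows "computable (Suc (Suc m)) (\<lambda>e. F (e 0) (\<lambda>j. e (Suc (Suc j))))"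
proof -
  define \<sigma> where "\<sigma> = (\<lambda>i::nat. if i = 0 then 0 else Suc i)"
  have "computable (Suc (Suc m)) (\<lambda>e. F ((\<lambda>i. e (\<sigma> i)) 0) (\<lambda>j. (\<lambda>i. e (\<sigma> i)) (Suc j)))"
    by (rule computable_reindex[OF assms]) (simp add: \<sigma>_def)
  then show ?thesis by (rule computable_cong) (simp add: \<sigma>_def)
qed

lemma computable_sum:
  assumes "computable (Suc m) (\<lambda>e. F (e 0) (\<lambda>j. e (Suc j)))" "computable m N"
  shows "computable m (\<lambda>e. \<Sum>i<N e. F i e)"
proof -
  have r: "computable m (\<lambda>e. rec_nat 0 (\<lambda>k r. r + F k e) (N e))"
    by (rule computable_rec_nat[OF assms(2) computable_const])
      (intro computable_add computable_proj computable_ignore_arg1 assms(1); simp)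
  have eq: "rec_nat 0 (\<lambda>k r. r + F k e) n = (\<Sum>i<n. F i e)" for n e
    by (induction n) auto
  show ?thesis by (rule computable_cong[OF r]) (rule eq[symmetric])
qed

lemma computable_bex:
  assumes "computable (Suc m) (\<lambda>e. of_bool (P (e 0) (\<lambda>j. e (Suc j))))" "computable m N"
  shows "computable m (\<lambda>e. of_bool (\<exists>i<N e. P i e))"
proof -
  have r: "computable m (\<lambda>e. rec_nat 0 (\<lambda>k r. of_bool (r \<noteq> 0 \<or> P k e)) (N e))"
    by (rule computable_rec_nat[OF assms(2) computable_const])
      (intro computable_disj computable_not computable_eq0 computable_proj computable_ignore_arg1 assms(1); simp)
  have eq: "rec_nat 0 (\<lambda>k r. of_bool (r \<noteq> 0 \<or> P k e)) n = of_bool (\<exists>i<n. P i e)" for n e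
    by (induction n) (auto simp: less_Suc_eq)
  show ?thesis by (rule computable_cong[OF r]) (rule eq[symmetric])
qed

lemma computable_ball:
  assumes "computable (Suc m) (\<lambda>e. of_bool (P (e 0) (\<lambda>j. e (Suc j))))" "computable m N"
  shows "computable m (\<lambda>e. of_bool (\<forall>i<N e. P i e))"
proof -
  have "computable m (\<lambda>e. of_bool (\<not> (\<exists>i<N e. \<not> P i e)))"
    by (intro computable_not computable_bex[OF _ assms(2)] assms(1))
  then show ?thesis by (rule computable_cong) auto
qed

lemmas computable_intros = computable_const computable_proj computable_Suc computable_add
  computable_diff computable_mult computable_if computable_eq0 computable_not computable_conj
  computable_disj computable_imp computable_iff computable_eq computable_less
  computable_bex computable_ball computable_sum

lemma computable_div2:
  assumes "computable m A"
  shows "computable m (\<lambda>e. A e div 2)"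
proof -
  have r: "computable 1 (\<lambda>e. rec_nat 0 (\<lambda>k r. if Suc k = 2 * Suc r then Suc r else r) (e 0))"
    by (intro computable_rec_nat computable_intros) simp_all
  have eq: "rec_nat 0 (\<lambda>k r. if Suc k = 2 * Suc r then Suc r else r) n = n div 2" for n
    by (induction n) auto
  have "computable 1 (\<lambda>e. e 0 div 2)" by (rule computable_cong[OF r]) (rule eq[symmetric])
  from computable_unary[OF this assms] show ?thesis .
qed

lemma computable_even:
  assumes "computable m A"
  shows "computable m (\<lambda>e. of_bool (even (A e)))"
proof -
  have r: "computable m (\<lambda>e. of_bool (2 * (A e div 2) = A e))"
    by (intro computable_intros computable_div2 assms)
  have even_iff: "even x \<longleftrightarrow> 2 * (x div 2) = x" for x :: nat by presburger
  show ?thesis by (rule computable_cong[OF r]) (simp only: even_iff)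
qed

lemma computable_pow2:
  assumes "computable m A"
  shows "computable m (\<lambda>e. 2 ^ A e)"
proof -
  have r: "computable 1 (\<lambda>e. rec_nat 1 (\<lambda>k r. r + r) (e 0))"
    by (intro computable_rec_nat computable_intros) simp_all
  have eq: "rec_nat 1 (\<lambda>k r. r + r) n = (2::nat) ^ n" for n
    by (induction n) auto
  have "computable 1 (\<lambda>e. 2 ^ e 0)" by (rule computable_cong[OF r]) (rule eq[symmetric])
  from computable_unary[OF this assms] show ?thesis .
qed


section \<open>Arithmetic coding of pairs, lists and programs\<close>

lemma computable_prod_encode:
  assumes "computable m A" "computable m B"
  shows "computable m (\<lambda>e. prod_encode (A e, B e))"
proof -
  have r: "computable 1 (\<lambda>e. rec_nat 0 (\<lambda>k r. r + Suc k) (e 0))"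
    by (intro computable_rec_nat computable_intros) simp_all
  have eq: "rec_nat 0 (\<lambda>k r. r + Suc k) n = triangle n" for n
    by (induction n) auto
  have "computable 1 (\<lambda>e. triangle (e 0))" by (rule computable_cong[OF r]) (rule eq[symmetric])
  then have "computable m (\<lambda>e. triangle (A e + B e) + A e)"
    by (intro computable_add computable_unary[OF _ computable_add] assms)
  then show ?thesis by (rule computable_cong) (simp add: prod_encode_def)
qed

definition pfst :: "nat \<Rightarrow> nat" where "pfst n = fst (prod_decode n)"
definition psnd :: "nat \<Rightarrow> nat" where "psnd n = snd (prod_decode n)"

lemma pfst_prod_encode [simp]: "pfst (prod_encode (a, b)) = a"
  and psnd_prod_encode [simp]: "psnd (prod_encode (a, b)) = b"
  by (simp_all add: pfst_def psnd_def)

lemma prod_encode_eq_iff: "prod_encode (a, b) = n \<longleftrightarrow> a = pfst n \<and> b = psnd n"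
  by (metis pfst_def psnd_def prod.collapse prod_decode_inverse prod_encode_inverse prod.inject)

lemma pfst_le: "pfst n \<le> n" and psnd_le: "psnd n \<le> n"
  by (metis le_prod_encode_1 prod_encode_eq_iff, metis le_prod_encode_2 prod_encode_eq_iff)

text \<open>Unpairing is computable because both components are bounded by the code.\<close>

lemma pfst_as_sum: "pfst n = (\<Sum>a<Suc n. \<Sum>b<Suc n. if prod_encode (a, b) = n then a else 0)"
proof -
  have "(\<Sum>a<Suc n. \<Sum>b<Suc n. if prod_encode (a, b) = n then a else 0)
      = (\<Sum>a<Suc n. if a = pfst n then (\<Sum>b<Suc n. if b = psnd n then a else 0) else 0)"
    unfolding prod_encode_eq_iff by (intro sum.cong) auto
  also have "\<dots> = (\<Sum>a<Suc n. if a = pfst n then a else 0)"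
    using psnd_le[of n] by (intro sum.cong) auto
  also have "\<dots> = pfst n" using pfst_le[of n] by simp
  finally show ?thesis by simp
qed

lemma psnd_as_sum: "psnd n = (\<Sum>a<Suc n. \<Sum>b<Suc n. if prod_encode (a, b) = n then b else 0)"
proof -
  have "(\<Sum>a<Suc n. \<Sum>b<Suc n. if prod_encode (a, b) = n then b else 0)
      = (\<Sum>a<Suc n. if a = pfst n then (\<Sum>b<Suc n. if b = psnd n then b else 0) else 0)"
    unfolding prod_encode_eq_iff by (intro sum.cong) auto
  also have "\<dots> = (\<Sum>a<Suc n. if a = pfst n then psnd n else 0)"
    using psnd_le[of n] by (intro sum.cong) auto
  also have "\<dots> = psnd n" using pfst_le[of n] by simp
  finally show ?thesis by simp
qed

lemma computable_pfst:
  assumes "computable m A"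
  shows "computable m (\<lambda>e. pfst (A e))"
proof -
  have "computable 1 (\<lambda>e. pfst (e 0))"
    unfolding pfst_as_sum by (intro computable_intros computable_prod_encode; simp)
  from computable_unary[OF this assms] show ?thesis .
qed

lemma computable_psnd:
  assumes "computable m A"
  shows "computable m (\<lambda>e. psnd (A e))"
proof -
  have "computable 1 (\<lambda>e. psnd (e 0))"
    unfolding psnd_as_sum by (intro computable_intros computable_prod_encode; simp)
  from computable_unary[OF this assms] show ?thesis .
qed

definition ncons :: "nat \<Rightarrow> nat \<Rightarrow> nat" where "ncons x c = Suc (prod_encode (x, c))"
definition nhd :: "nat \<Rightarrow> nat" where "nhd c = pfst (c - 1)"
definition ntl :: "nat \<Rightarrow> nat" where "ntl c = psnd (c - 1)"

primrec ndrop :: "nat \<Rightarrow> nat \<Rightarrow> nat" where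
  "ndrop 0 c = c"
| "ndrop (Suc k) c = ntl (ndrop k c)"

definition nnth :: "nat \<Rightarrow> nat \<Rightarrow> nat" where "nnth k c = nhd (ndrop k c)"

lemma nhd_ncons [simp]: "nhd (ncons x c) = x" and ntl_ncons [simp]: "ntl (ncons x c) = c"
  by (simp_all add: nhd_def ntl_def ncons_def)

lemma ncons_pos [simp]: "0 < ncons x c"
  by (simp add: ncons_def)

lemma list_encode_Cons [simp]: "list_encode (x # xs) = ncons x (list_encode xs)"
  by (simp add: ncons_def)

declare list_encode.simps(2) [simp del]

lemma ntl_0: "ntl 0 = 0"
  by (simp add: ntl_def psnd_def prod_decode_def prod_decode_aux.simps)

lemma ndrop_list_encode: "ndrop k (list_encode xs) = list_encode (drop k xs)"
proof (induction k arbitrary: xs)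
  case 0
  then show ?case by simp
next
  case (Suc k)
  have "ntl (list_encode ys) = list_encode (tl ys)" for ys
    by (cases ys) (simp_all add: ntl_0)
  then show ?case using Suc by (simp add: drop_Suc drop_tl)
qed

lemma ndrop_list_encode_eq_0: "ndrop k (list_encode xs) = 0 \<longleftrightarrow> length xs \<le> k"
proof -
  have "list_encode ys = 0 \<longleftrightarrow> ys = []" for ys by (cases ys) auto
  then show ?thesis by (simp add: ndrop_list_encode)
qed

lemma nnth_list_encode: "k < length xs \<Longrightarrow> nnth k (list_encode xs) = xs ! k"
  by (simp add: nnth_def ndrop_list_encode Cons_nth_drop_Suc[symmetric])

lemma length_le_list_encode: "length xs \<le> list_encode xs"
proof (induction xs)
  case Nil
  then show ?case by simp
next
  case (Cons x xs)
  have "list_encode xs \<le> prod_encode (x, list_encode xs)" by (rule le_prod_encode_2)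
  then show ?case using Cons by (simp add: ncons_def)
qed

lemma computable_ncons: "computable m A \<Longrightarrow> computable m B \<Longrightarrow> computable m (\<lambda>e. ncons (A e) (B e))"
  unfolding ncons_def by (intro computable_prod_encode computable_intros)

lemma computable_nhd: "computable m A \<Longrightarrow> computable m (\<lambda>e. nhd (A e))"
  unfolding nhd_def by (intro computable_pfst computable_intros)

lemma computable_ntl: "computable m A \<Longrightarrow> computable m (\<lambda>e. ntl (A e))"
  unfolding ntl_def by (intro computable_psnd computable_intros)

lemma computable_ndrop:
  assumes "computable m A" "computable m B"
  shows "computable m (\<lambda>e. ndrop (A e) (B e))"
proof -
  have r: "computable 2 (\<lambda>e. rec_nat (e 1) (\<lambda>k r. ntl r) (e 0))"
    by (intro computable_rec_nat computable_ntl computable_intros) simp_all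
  have eq: "rec_nat c (\<lambda>k r. ntl r) n = ndrop n c" for n c
    by (induction n) auto
  have "computable 2 (\<lambda>e. ndrop (e 0) (e 1))" by (rule computable_cong[OF r]) (rule eq[symmetric])
  from computable_binary[OF this assms] show ?thesis .
qed

lemma computable_nnth: "computable m A \<Longrightarrow> computable m B \<Longrightarrow> computable m (\<lambda>e. nnth (A e) (B e))"
  unfolding nnth_def by (intro computable_nhd computable_ndrop)


lemma ndrop_list_encode_pos: "0 < ndrop k (list_encode xs) \<longleftrightarrow> k < length xs"
  using ndrop_list_encode_eq_0[of k xs] by linarith

lemma ball_ndrop_list_encode:
  "(\<forall>t<list_encode xs. 0 < ndrop t (list_encode xs) \<longrightarrow> P t) \<longleftrightarrow> (\<forall>t<length xs. P t)"
  using length_le_list_encode[of xs] by (auto simp: ndrop_list_encode_pos intro: order.strict_trans2)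

lemma bex_ndrop_list_encode:
  "(\<exists>t<list_encode xs. 0 < ndrop t (list_encode xs) \<and> P t) \<longleftrightarrow> (\<exists>t<length xs. P t)"
  using length_le_list_encode[of xs] by (auto simp: ndrop_list_encode_pos intro: order.strict_trans2)

lemma same_length_code_iff:
  "(\<forall>t < list_encode xs + list_encode ys. (ndrop t (list_encode xs) = 0) = (ndrop t (list_encode ys) = 0))
    \<longleftrightarrow> length xs = length ys"
proof
  assume same: "\<forall>t < list_encode xs + list_encode ys. (ndrop t (list_encode xs) = 0) = (ndrop t (list_encode ys) = 0)"
  show "length xs = length ys"
  proof (rule ccontr)
    assume ne: "length xs \<noteq> length ys"
    define t where "t = min (length xs) (length ys)"
    have "t < list_encode xs + list_encode ys"
      using length_le_list_encode[of xs] length_le_list_encode[of ys] ne by (auto simp: t_def)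
    then have "(length xs \<le> t) = (length ys \<le> t)"
      using same by (simp add: ndrop_list_encode_eq_0)
    then show False using ne by (auto simp: t_def min_def split: if_splits)
  qed
qed (simp add: ndrop_list_encode_eq_0)

primrec prog_code :: "prog \<Rightarrow> nat" where
  "prog_code Zero = prod_encode (0, 0)"
| "prog_code Succ = prod_encode (1, 0)"
| "prog_code (Proj i) = prod_encode (2, i)"
| "prog_code Orc = prod_encode (3, 0)"
| "prog_code (Comp f gs) = prod_encode (4, prod_encode (prog_code f, list_encode (map prog_code gs)))"
| "prog_code (PrimRec f g) = prod_encode (5, prod_encode (prog_code f, prog_code g))"
| "prog_code (Mu f) = prod_encode (6, prog_code f)"

text \<open>The defining equations stay folded, so that the characterisations \<open>step_ok_Zero\<close>, \<dots>
  below can serve as rewrite rules.\<close>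

declare prog_code.simps [simp del]

lemma eval_Mu_halts_iff:
  assumes "\<forall>e. eval \<alpha> p (map e [0..<2]) (G (e 0) (e 1))"
  shows "(\<exists>y. eval \<alpha> (Mu p) [x] y) \<longleftrightarrow> (\<exists>c. G c x = 0)"
proof -
  have G: "eval \<alpha> p [c, x] (G c x)" for c
    using assms[rule_format, of "\<lambda>i. if i = 0 then c else x"] by (simp add: upt_rec)
  show ?thesis
  proof
    assume "\<exists>y. eval \<alpha> (Mu p) [x] y"
    then obtain y where "eval \<alpha> (Mu p) [x] y" by blast
    then have "eval \<alpha> p [y, x] 0" by (cases rule: eval.cases) auto
    then show "\<exists>c. G c x = 0" using G eval_det by blast
  next
    assume "\<exists>c. G c x = 0"
    define c0 where "c0 = (LEAST c. G c x = 0)"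
    have "G c0 x = 0" unfolding c0_def using \<open>\<exists>c. G c x = 0\<close> by (rule LeastI_ex)
    moreover have "\<forall>z<c0. G z x \<noteq> 0" unfolding c0_def using not_less_Least by blast
    ultimately have "eval \<alpha> (Mu p) [x] c0" using G by (metis ev_mu)
    then show "\<exists>y. eval \<alpha> (Mu p) [x] y" by blast
  qed
qed

lemma ce_sets_Collect_ex:
  assumes "computable 2 (\<lambda>e. of_bool (Q (e 0) (e 1)))"
  shows "{x. \<exists>c. Q c x} \<in> ce_sets"
proof -
  have "computable 2 (\<lambda>e. if Q (e 0) (e 1) then 0 else 1)"
    by (intro computable_if assms computable_const)
  then obtain p where p: "\<forall>e. eval (\<lambda>_. 0) p (map e [0..<2]) (if Q (e 0) (e 1) then 0 else 1)"
    unfolding computable_def by blast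
  have "{x. \<exists>c. Q c x} = {x. \<exists>y. eval (\<lambda>_. 0) (Mu p) [x] y}"
    using eval_Mu_halts_iff[OF p] by auto
  then show ?thesis unfolding ce_sets_def by blast
qed

lemma ce_sets_singleton: "{a} \<in> ce_sets"
  using ce_sets_Collect_ex[of "\<lambda>c x. x = a"] by (simp add: computable_intros)

lemma ce_sets_empty: "{} \<in> ce_sets"
  using ce_sets_Collect_ex[of "\<lambda>c x. False"] by (simp add: computable_intros)


section \<open>Certificates for oracle computations\<close>

text \<open>A fact \<open>eval_fact md pc xsc y\<close> asserts that the program with code \<open>pc\<close>, run with the
  oracle of mode \<open>md\<close> on the argument list with code \<open>xsc\<close>, returns \<open>y\<close>. A certificate is a
  list of entries \<open>\<langle>fact, aux\<rangle>\<close>, each justified by one evaluation rule from the facts of earlier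
  entries; \<open>aux\<close> carries the intermediate values of \<open>Comp\<close> and \<open>PrimRec\<close>.\<close>

definition eval_key :: "nat \<Rightarrow> nat \<Rightarrow> nat \<Rightarrow> nat" where
  "eval_key md pc xsc = prod_encode (md, prod_encode (pc, xsc))"

definition eval_fact :: "nat \<Rightarrow> nat \<Rightarrow> nat \<Rightarrow> nat \<Rightarrow> nat" where
  "eval_fact md pc xsc y = prod_encode (eval_key md pc xsc, y)"

text \<open>Mode \<open>0\<close> is the oracle \<open>\<lambda>_. 0\<close>; modes \<open>2 l + 1\<close> and \<open>2 l + 2\<close> stand for the oracles
  \<open>join fS (H l)\<close> and \<open>join fP (H l)\<close>, where \<open>H 0 = h0\<close> and \<open>H (l + 1)\<close> is computed by the
  program with code \<open>cqS\<close> in mode \<open>2 l + 1\<close>. So a query to \<open>H l\<close> with \<open>l > 0\<close> is answered by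
  an earlier fact of mode \<open>2 l - 1\<close>.\<close>

locale certificate_checker =
  fixes fS fP h0 :: "nat \<Rightarrow> nat" and cqS :: nat
begin

definition oracle_ok :: "(nat \<Rightarrow> bool) \<Rightarrow> nat \<Rightarrow> nat \<Rightarrow> nat \<Rightarrow> bool" where
  "oracle_ok E md x y \<longleftrightarrow>
     (md = 0 \<and> y = 0) \<or>
     (md \<noteq> 0 \<and> even x \<and> y = (if odd md then fS (x div 2) else fP (x div 2))) \<or>
     (md \<noteq> 0 \<and> odd x \<and> (md - 1) div 2 = 0 \<and> y = h0 (x div 2)) \<or>
     (md \<noteq> 0 \<and> odd x \<and> (md - 1) div 2 \<noteq> 0 \<and>
        E (eval_fact (2 * ((md - 1) div 2) - 1) cqS (ncons (x div 2) 0) y))"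

text \<open>\<open>E1\<close> holds for the facts of the earlier entries, \<open>E2\<close> for the keys of those with a
  nonzero value (needed for the side condition of \<open>Mu\<close>).\<close>

definition step_ok :: "(nat \<Rightarrow> bool) \<Rightarrow> (nat \<Rightarrow> bool) \<Rightarrow> nat \<Rightarrow> nat \<Rightarrow> nat \<Rightarrow> nat \<Rightarrow> nat \<Rightarrow> bool" where
  "step_ok E1 E2 md pc xsc y aux \<longleftrightarrow>
     (pfst pc = 0 \<and> y = 0) \<or>
     (pfst pc = 1 \<and> xsc \<noteq> 0 \<and> y = Suc (nhd xsc)) \<or>
     (pfst pc = 2 \<and> ndrop (psnd pc) xsc \<noteq> 0 \<and> y = nnth (psnd pc) xsc) \<or>
     (pfst pc = 3 \<and> xsc \<noteq> 0 \<and> oracle_ok E1 md (nhd xsc) y) \<or>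
     (pfst pc = 4 \<and>
        (\<forall>t < psnd (psnd pc) + aux. (ndrop t (psnd (psnd pc)) = 0) = (ndrop t aux = 0)) \<and>
        (\<forall>t < psnd (psnd pc). ndrop t (psnd (psnd pc)) \<noteq> 0 \<longrightarrow>
           E1 (eval_fact md (nnth t (psnd (psnd pc))) xsc (nnth t aux))) \<and>
        E1 (eval_fact md (pfst (psnd pc)) aux y)) \<or>
     (pfst pc = 5 \<and> xsc \<noteq> 0 \<and> nhd xsc = 0 \<and> E1 (eval_fact md (pfst (psnd pc)) (ntl xsc) y)) \<or>
     (pfst pc = 5 \<and> xsc \<noteq> 0 \<and> nhd xsc \<noteq> 0 \<and>
        E1 (eval_fact md pc (ncons (nhd xsc - 1) (ntl xsc)) aux) \<and>
        E1 (eval_fact md (psnd (psnd pc)) (ncons (nhd xsc - 1) (ncons aux (ntl xsc))) y)) \<or>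
     (pfst pc = 6 \<and> E1 (eval_fact md (psnd pc) (ncons y xsc) 0) \<and>
        (\<forall>z<y. E2 (eval_key md (psnd pc) (ncons z xsc))))"

definition entry_ok :: "(nat \<Rightarrow> bool) \<Rightarrow> (nat \<Rightarrow> bool) \<Rightarrow> nat \<Rightarrow> bool" where
  "entry_ok E1 E2 ent =
     step_ok E1 E2 (pfst (pfst (pfst ent))) (pfst (psnd (pfst (pfst ent)))) (psnd (psnd (pfst (pfst ent))))
       (psnd (pfst ent)) (psnd ent)"

lemma entry_ok_prod_encode:
  "entry_ok E1 E2 (prod_encode (eval_fact md pc xsc y, aux)) = step_ok E1 E2 md pc xsc y aux"
  by (simp add: entry_ok_def eval_fact_def eval_key_def)

lemma step_ok_Zero: "step_ok E1 E2 md (prog_code Zero) xsc y aux \<longleftrightarrow> y = 0"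
  by (simp add: step_ok_def prog_code.simps)

lemma step_ok_Succ:
  "step_ok E1 E2 md (prog_code Succ) (list_encode xs) y aux \<longleftrightarrow> (\<exists>x xs'. xs = x # xs' \<and> y = Suc x)"
  by (cases xs) (auto simp: step_ok_def prog_code.simps)

lemma step_ok_Proj:
  "step_ok E1 E2 md (prog_code (Proj i)) (list_encode xs) y aux \<longleftrightarrow> i < length xs \<and> y = xs ! i"
  by (auto simp: step_ok_def prog_code.simps ndrop_list_encode_eq_0 nnth_list_encode)

lemma step_ok_Orc:
  "step_ok E1 E2 md (prog_code Orc) (list_encode xs) y aux \<longleftrightarrow>
     (\<exists>x xs'. xs = x # xs' \<and> oracle_ok E1 md x y)"
  by (cases xs) (auto simp: step_ok_def prog_code.simps)

lemma step_ok_Comp: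
  "step_ok E1 E2 md (prog_code (Comp f gs)) xsc y (list_encode ys) \<longleftrightarrow>
     length ys = length gs \<and> (\<forall>t<length gs. E1 (eval_fact md (prog_code (gs ! t)) xsc (ys ! t))) \<and>
     E1 (eval_fact md (prog_code f) (list_encode ys) y)"
  by (auto simp: step_ok_def prog_code.simps same_length_code_iff ball_ndrop_list_encode nnth_list_encode)

lemma step_ok_PrimRec:
  "step_ok E1 E2 md (prog_code (PrimRec f g)) (list_encode xs) y aux \<longleftrightarrow>
     (\<exists>xs'. xs = 0 # xs' \<and> E1 (eval_fact md (prog_code f) (list_encode xs') y)) \<or>
     (\<exists>n xs'. xs = Suc n # xs' \<and>
        E1 (eval_fact md (prog_code (PrimRec f g)) (list_encode (n # xs')) aux) \<and>
        E1 (eval_fact md (prog_code g) (list_encode (n # aux # xs')) y))"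
  by (cases xs; case_tac "hd xs") (auto simp: step_ok_def prog_code.simps)

lemma step_ok_Mu:
  "step_ok E1 E2 md (prog_code (Mu f)) (list_encode xs) y aux \<longleftrightarrow>
     E1 (eval_fact md (prog_code f) (list_encode (y # xs)) 0) \<and>
     (\<forall>z<y. E2 (eval_key md (prog_code f) (list_encode (z # xs))))"
  by (simp add: step_ok_def prog_code.simps)


definition proved :: "nat list \<Rightarrow> nat \<Rightarrow> bool" where
  "proved es J \<longleftrightarrow> (\<exists>x\<in>set es. pfst x = J)"

definition nonzero_proved :: "nat list \<Rightarrow> nat \<Rightarrow> bool" where
  "nonzero_proved es K \<longleftrightarrow> (\<exists>x\<in>set es. pfst (pfst x) = K \<and> psnd (pfst x) \<noteq> 0)"

definition valid_cert :: "nat list \<Rightarrow> bool" where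
  "valid_cert es \<longleftrightarrow> (\<forall>i<length es. entry_ok (proved (take i es)) (nonzero_proved (take i es)) (es ! i))"

text \<open>The same notions read off a code \<open>c = list_encode es\<close>; bounding all quantifiers by \<open>c\<close>
  makes them computable.\<close>

definition proved_before :: "nat \<Rightarrow> nat \<Rightarrow> nat \<Rightarrow> bool" where
  "proved_before c i J \<longleftrightarrow> (\<exists>j<i. pfst (nnth j c) = J)"

definition nonzero_proved_before :: "nat \<Rightarrow> nat \<Rightarrow> nat \<Rightarrow> bool" where
  "nonzero_proved_before c i K \<longleftrightarrow> (\<exists>j<i. pfst (pfst (nnth j c)) = K \<and> psnd (pfst (nnth j c)) \<noteq> 0)"

definition valid_code :: "nat \<Rightarrow> bool" where
  "valid_code c \<longleftrightarrow>
     (\<forall>i<c. 0 < ndrop i c \<longrightarrow> entry_ok (proved_before c i) (nonzero_proved_before c i) (nnth i c))"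

definition proves_code :: "nat \<Rightarrow> nat \<Rightarrow> bool" where
  "proves_code c J \<longleftrightarrow> (\<exists>i<c. 0 < ndrop i c \<and> pfst (nnth i c) = J)"

definition proves_key_code :: "nat \<Rightarrow> nat \<Rightarrow> bool" where
  "proves_key_code c K \<longleftrightarrow> (\<exists>i<c. 0 < ndrop i c \<and> pfst (pfst (nnth i c)) = K)"

definition certified :: "nat \<Rightarrow> bool" where
  "certified J \<longleftrightarrow> (\<exists>c. valid_code c \<and> proves_code c J)"

definition certified_key :: "nat \<Rightarrow> bool" where
  "certified_key K \<longleftrightarrow> (\<exists>c. valid_code c \<and> proves_key_code c K)"

lemma bex_set_take_iff: "i \<le> length es \<Longrightarrow> (\<exists>x\<in>set (take i es). P x) \<longleftrightarrow> (\<exists>j<i. P (es ! j))"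
proof
  assume "i \<le> length es" "\<exists>x\<in>set (take i es). P x"
  then show "\<exists>j<i. P (es ! j)" by (fastforce simp: in_set_conv_nth)
next
  assume i: "i \<le> length es" and "\<exists>j<i. P (es ! j)"
  then obtain j where j: "j < i" "P (es ! j)" by blast
  then have "take i es ! j \<in> set (take i es)" using i by (intro nth_mem) simp
  then show "\<exists>x\<in>set (take i es). P x" using j by auto
qed

lemma bex_nnth_list_encode: "(\<exists>i<length es. P (nnth i (list_encode es))) \<longleftrightarrow> (\<exists>x\<in>set es. P x)"
  by (metis in_set_conv_nth nnth_list_encode)

lemma proved_before_list_encode:
  "i \<le> length es \<Longrightarrow> proved_before (list_encode es) i = proved (take i es)"
  and nonzero_proved_before_list_encode:
  "i \<le> length es \<Longrightarrow> nonzero_proved_before (list_encode es) i = nonzero_proved (take i es)"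
  unfolding proved_before_def nonzero_proved_before_def proved_def nonzero_proved_def fun_eq_iff
  by (auto simp: bex_set_take_iff nnth_list_encode)

lemma valid_code_list_encode: "valid_code (list_encode es) \<longleftrightarrow> valid_cert es"
  unfolding valid_code_def valid_cert_def
  by (simp add: ball_ndrop_list_encode nnth_list_encode proved_before_list_encode
      nonzero_proved_before_list_encode)

lemma proves_code_list_encode: "proves_code (list_encode es) J \<longleftrightarrow> proved es J"
  unfolding proves_code_def proved_def bex_ndrop_list_encode by (rule bex_nnth_list_encode)

lemma proves_key_code_list_encode:
  "proves_key_code (list_encode es) K \<longleftrightarrow> (\<exists>x\<in>set es. pfst (pfst x) = K)"
  unfolding proves_key_code_def bex_ndrop_list_encode by (rule bex_nnth_list_encode)

lemma certified_iff_valid_cert: "certified J \<longleftrightarrow> (\<exists>es. valid_cert es \<and> proved es J)"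
  unfolding certified_def
  by (metis list_decode_inverse valid_code_list_encode proves_code_list_encode)

lemma certified_key_iff_valid_cert:
  "certified_key K \<longleftrightarrow> (\<exists>es. valid_cert es \<and> (\<exists>x\<in>set es. pfst (pfst x) = K))"
  unfolding certified_key_def
  by (metis list_decode_inverse valid_code_list_encode proves_key_code_list_encode)

lemma computable_valid_code:
  assumes "fS \<in> K2eff" "fP \<in> K2eff" "h0 \<in> K2eff" "computable m C"
  shows "computable m (\<lambda>e. of_bool (valid_code (C e)))"
proof -
  have step: "computable 7 (\<lambda>e. of_bool (step_ok (proved_before (e 0) (e 1))
      (nonzero_proved_before (e 0) (e 1)) (e 2) (e 3) (e 4) (e 5) (e 6)))"
    unfolding step_ok_def oracle_ok_def proved_before_def nonzero_proved_before_def
      eval_fact_def eval_key_def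
    by (intro computable_intros computable_prod_encode computable_pfst computable_psnd
        computable_div2 computable_even computable_ncons computable_nhd computable_ntl
        computable_ndrop computable_nnth computable_K2eff[OF assms(1)] computable_K2eff[OF assms(2)]
        computable_K2eff[OF assms(3)]; simp)
  define ent where "ent = (\<lambda>e::nat \<Rightarrow> nat. nnth (e 1) (e 0))"
  define Fs where "Fs = [\<lambda>e. e 0, \<lambda>e. e 1, \<lambda>e. pfst (pfst (pfst (ent e))),
    \<lambda>e. pfst (psnd (pfst (pfst (ent e)))), \<lambda>e. psnd (psnd (pfst (pfst (ent e)))),
    \<lambda>e. psnd (pfst (ent e)), \<lambda>e. psnd (ent e)]"
  have "\<forall>i<7. computable 2 (Fs ! i)"
    unfolding Fs_def ent_def
    by (auto simp: less_Suc_eq numeral_eq_Suc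
        intro!: computable_proj computable_pfst computable_psnd computable_nnth)
  from computable_comp[OF step this]
  have "computable 2 (\<lambda>e. of_bool (entry_ok (proved_before (e 0) (e 1))
      (nonzero_proved_before (e 0) (e 1)) (nnth (e 1) (e 0))))"
    by (rule computable_cong) (simp add: entry_ok_def Fs_def ent_def numeral_eq_Suc)
  note entry = computable_binary[OF this]
  show ?thesis
    unfolding valid_code_def
    by (intro computable_intros computable_ndrop entry assms(4) computable_shift[OF assms(4)]; simp)
qed

lemma computable_proves_code:
  assumes "computable m C" "computable m J"
  shows "computable m (\<lambda>e. of_bool (proves_code (C e) (J e)))"
  unfolding proves_code_def
  by (intro computable_intros computable_ndrop computable_nnth computable_pfst assms
      computable_shift[OF assms(1)] computable_shift[OF assms(2)]; simp)

lemma computable_proves_key_code: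
  assumes "computable m C" "computable m K"
  shows "computable m (\<lambda>e. of_bool (proves_key_code (C e) (K e)))"
  unfolding proves_key_code_def
  by (intro computable_intros computable_ndrop computable_nnth computable_pfst assms
      computable_shift[OF assms(1)] computable_shift[OF assms(2)]; simp)

lemma ce_certified:
  assumes "fS \<in> K2eff" "fP \<in> K2eff" "h0 \<in> K2eff" "computable 1 (\<lambda>e. J (e 0))"
  shows "{x. certified (J x)} \<in> ce_sets"
proof -
  have "computable 2 (\<lambda>e. J (e 1))"
    using computable_reindex[OF assms(4), of "\<lambda>_. 1"] by simp
  then have "computable 2 (\<lambda>e. of_bool (valid_code (e 0) \<and> proves_code (e 0) (J (e 1))))"
    by (intro computable_conj computable_valid_code[OF assms(1-3)] computable_proves_code
        computable_proj) simp_all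
  from ce_sets_Collect_ex[OF this] show ?thesis by (simp add: certified_def)
qed

lemma ce_certified_key:
  assumes "fS \<in> K2eff" "fP \<in> K2eff" "h0 \<in> K2eff" "computable 1 (\<lambda>e. K (e 0))"
  shows "{x. certified_key (K x)} \<in> ce_sets"
proof -
  have "computable 2 (\<lambda>e. K (e 1))"
    using computable_reindex[OF assms(4), of "\<lambda>_. 1"] by simp
  then have "computable 2 (\<lambda>e. of_bool (valid_code (e 0) \<and> proves_key_code (e 0) (K (e 1))))"
    by (intro computable_conj computable_valid_code[OF assms(1-3)] computable_proves_key_code
        computable_proj) simp_all
  from ce_sets_Collect_ex[OF this] show ?thesis by (simp add: certified_key_def)
qed

lemma proved_mono: "proved es J \<Longrightarrow> set es \<subseteq> set es' \<Longrightarrow> proved es' J"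
  and nonzero_proved_mono: "nonzero_proved es K \<Longrightarrow> set es \<subseteq> set es' \<Longrightarrow> nonzero_proved es' K"
  unfolding proved_def nonzero_proved_def by blast+

lemma nonzero_proved_iff: "nonzero_proved es K \<longleftrightarrow> (\<exists>v. v \<noteq> 0 \<and> proved es (prod_encode (K, v)))"
  unfolding nonzero_proved_def proved_def by (metis prod_encode_eq_iff)

lemma oracle_ok_mono: "oracle_ok E md x y \<Longrightarrow> (\<And>J. E J \<Longrightarrow> E' J) \<Longrightarrow> oracle_ok E' md x y"
  unfolding oracle_ok_def by blast

lemma step_ok_mono:
  assumes "step_ok E1 E2 md pc xsc y aux" "\<And>J. E1 J \<Longrightarrow> E1' J" "\<And>K. E2 K \<Longrightarrow> E2' K"
  shows "step_ok E1' E2' md pc xsc y aux"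
  using assms(1) unfolding step_ok_def
  by (elim disjE) (auto intro: oracle_ok_mono assms(2,3))

lemma valid_cert_snoc:
  "valid_cert (es @ [x]) \<longleftrightarrow> valid_cert es \<and> entry_ok (proved es) (nonzero_proved es) x"
  unfolding valid_cert_def by (auto simp: nth_append less_Suc_eq)

lemma valid_cert_append:
  assumes "valid_cert es1" "valid_cert es2"
  shows "valid_cert (es1 @ es2)"
  unfolding valid_cert_def
proof (intro allI impI)
  fix i assume i: "i < length (es1 @ es2)"
  show "entry_ok (proved (take i (es1 @ es2))) (nonzero_proved (take i (es1 @ es2))) ((es1 @ es2) ! i)"
  proof (cases "i < length es1")
    case True
    then show ?thesis using assms(1) by (simp add: valid_cert_def nth_append)
  next
    case False
    define k where "k = i - length es1"
    have k: "k < length es2" "i = length es1 + k" using False i by (auto simp: k_def)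
    then have "entry_ok (proved (take k es2)) (nonzero_proved (take k es2)) (es2 ! k)"
      using assms(2) by (simp add: valid_cert_def)
    moreover have "set (take k es2) \<subseteq> set (take i (es1 @ es2))" using k by auto
    ultimately show ?thesis using k unfolding entry_ok_def
      by (auto simp: nth_append elim!: step_ok_mono intro: proved_mono nonzero_proved_mono)
  qed
qed

lemma valid_cert_collect:
  assumes "\<forall>J\<in>set Js. certified J"
  shows "\<exists>es. valid_cert es \<and> (\<forall>J\<in>set Js. proved es J)"
  using assms
proof (induction Js)
  case Nil
  have "valid_cert []" by (simp add: valid_cert_def)
  then show ?case by auto
next
  case (Cons J Js)
  then obtain es1 where es1: "valid_cert es1" "\<forall>J\<in>set Js. proved es1 J" by auto
  obtain es2 where es2: "valid_cert es2" "proved es2 J"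
    using Cons.prems certified_iff_valid_cert by auto
  have "valid_cert (es1 @ es2)" using es1(1) es2(1) by (rule valid_cert_append)
  moreover have "\<forall>J'\<in>set (J # Js). proved (es1 @ es2) J'"
    using es1(2) es2(2) by (auto intro: proved_mono)
  ultimately show ?case by blast
qed

lemma certified_by_step:
  assumes "\<forall>J\<in>set Js. certified J"
    and "\<And>es. (\<forall>J\<in>set Js. proved es J) \<Longrightarrow> step_ok (proved es) (nonzero_proved es) md pc xsc y aux"
  shows "certified (eval_fact md pc xsc y)"
proof -
  obtain es where es: "valid_cert es" "\<forall>J\<in>set Js. proved es J"
    using valid_cert_collect[OF assms(1)] by blast
  let ?es' = "es @ [prod_encode (eval_fact md pc xsc y, aux)]"
  have "valid_cert ?es'"
    using es assms(2) by (simp add: valid_cert_snoc entry_ok_prod_encode)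
  moreover have "proved ?es' (eval_fact md pc xsc y)" by (simp add: proved_def)
  ultimately show ?thesis using certified_iff_valid_cert by blast
qed

lemma certified_Comp:
  assumes "length ys = length gs"
    and "\<forall>t<length gs. certified (eval_fact md (prog_code (gs ! t)) xsc (ys ! t))"
    and "certified (eval_fact md (prog_code f) (list_encode ys) z)"
  shows "certified (eval_fact md (prog_code (Comp f gs)) xsc z)"
proof -
  let ?Js = "eval_fact md (prog_code f) (list_encode ys) z #
    map (\<lambda>t. eval_fact md (prog_code (gs ! t)) xsc (ys ! t)) [0..<length gs]"
  have "\<forall>J\<in>set ?Js. certified J" using assms(2,3) by auto
  then show ?thesis
    using assms(1) by (intro certified_by_step[of ?Js, where aux = "list_encode ys"]) (auto simp: step_ok_Comp)
qed

lemma certified_Mu: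
  assumes "certified (eval_fact md (prog_code f) (list_encode (y # xs)) 0)"
    and "\<forall>z<y. \<exists>v. v \<noteq> 0 \<and> certified (eval_fact md (prog_code f) (list_encode (z # xs)) v)"
  shows "certified (eval_fact md (prog_code (Mu f)) (list_encode xs) y)"
proof -
  obtain v where v: "\<forall>z<y. v z \<noteq> 0 \<and> certified (eval_fact md (prog_code f) (list_encode (z # xs)) (v z))"
    using assms(2) by metis
  let ?Js = "eval_fact md (prog_code f) (list_encode (y # xs)) 0 #
    map (\<lambda>z. eval_fact md (prog_code f) (list_encode (z # xs)) (v z)) [0..<y]"
  have "\<forall>J\<in>set ?Js. certified J" using assms(1) v by auto
  moreover have "nonzero_proved es (eval_key md (prog_code f) (list_encode (z # xs)))"
    if "\<forall>J\<in>set ?Js. proved es J" "z < y" for es z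
    using that v unfolding nonzero_proved_iff eval_fact_def by auto
  ultimately show ?thesis
    by (intro certified_by_step[of ?Js, where aux = 0]) (auto simp del: list_encode_Cons simp: step_ok_Mu)
qed

end


section \<open>Soundness and completeness of certificates\<close>

locale oracle_tower = certificate_checker fS fP h0 "prog_code qS"
  for fS fP h0 :: "nat \<Rightarrow> nat" and qS :: prog +
  fixes H :: "nat \<Rightarrow> nat \<Rightarrow> nat"
  assumes H_0: "H 0 = h0"
    and H_Suc: "\<And>l n. eval (join fS (H l)) qS [n] (H (Suc l) n)"
begin

definition mode_oracle :: "nat \<Rightarrow> nat \<Rightarrow> nat" where
  "mode_oracle md = (if md = 0 then (\<lambda>_. 0) else join (if odd md then fS else fP) (H ((md - 1) div 2)))"

lemma mode_oracle_0: "mode_oracle 0 = (\<lambda>_. 0)"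
  by (simp add: mode_oracle_def)

lemma mode_oracle_odd: "mode_oracle (2 * l + 1) = join fS (H l)"
  by (simp add: mode_oracle_def)

lemma mode_oracle_even: "mode_oracle (2 * l + 2) = join fP (H l)"
proof -
  have "(2 * l + 2 - 1) div 2 = l" and "even (2 * l + 2)" by presburger+
  then show ?thesis by (simp add: mode_oracle_def)
qed

definition sound_facts :: "(nat \<Rightarrow> bool) \<Rightarrow> bool" where
  "sound_facts E \<longleftrightarrow>
     (\<forall>md p xs y. E (eval_fact md (prog_code p) (list_encode xs) y) \<longrightarrow> eval (mode_oracle md) p xs y)"

lemma oracle_ok_sound:
  assumes "oracle_ok E md x y" "sound_facts E"
  shows "y = mode_oracle md x"
  using assms(1) unfolding oracle_ok_def
proof (elim disjE conjE)
  assume "md = 0" "y = 0"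
  then show ?thesis by (simp add: mode_oracle_def)
next
  assume "md \<noteq> 0" "even x" "y = (if odd md then fS (x div 2) else fP (x div 2))"
  then show ?thesis by (simp add: mode_oracle_def join_def)
next
  assume "md \<noteq> 0" "odd x" "(md - 1) div 2 = 0" "y = h0 (x div 2)"
  then show ?thesis by (simp add: mode_oracle_def join_def H_0)
next
  assume md: "md \<noteq> 0" "odd x" "(md - 1) div 2 \<noteq> 0"
    and fact: "E (eval_fact (2 * ((md - 1) div 2) - 1) (prog_code qS) (ncons (x div 2) 0) y)"
  define l where "l = (md - 1) div 2 - 1"
  have l: "2 * ((md - 1) div 2) - 1 = 2 * l + 1" "(md - 1) div 2 = Suc l"
    using md(3) by (simp_all add: l_def)
  have "eval (mode_oracle (2 * l + 1)) qS [x div 2] y"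
    using fact assms(2) unfolding sound_facts_def l(1) by fastforce
  then have "y = H (Suc l) (x div 2)"
    using H_Suc eval_det unfolding mode_oracle_odd by blast
  then show ?thesis using md l by (simp add: mode_oracle_def join_def)
qed

lemma step_ok_sound:
  assumes step: "step_ok E1 E2 md (prog_code p) (list_encode xs) y aux"
    and E1: "sound_facts E1"
    and E2: "\<And>md p xs. E2 (eval_key md (prog_code p) (list_encode xs))
      \<Longrightarrow> \<exists>v. v \<noteq> 0 \<and> eval (mode_oracle md) p xs v"
  shows "eval (mode_oracle md) p xs y"
proof (cases p)
  case Zero
  then show ?thesis using step by (simp add: step_ok_Zero ev_zero)
next
  case Succ
  then show ?thesis using step by (auto simp del: list_encode_Cons simp: step_ok_Succ intro: ev_succ)
next
  case (Proj i)
  then show ?thesis using step by (auto simp: step_ok_Proj intro: ev_proj)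
next
  case Orc
  then obtain x xs' where "xs = x # xs'" "oracle_ok E1 md x y"
    using step by (auto simp del: list_encode_Cons simp: step_ok_Orc)
  then show ?thesis using Orc oracle_ok_sound[OF _ E1] by (auto intro: ev_orc)
next
  case (Comp f gs)
  define ys where "ys = list_decode aux"
  have "step_ok E1 E2 md (prog_code (Comp f gs)) (list_encode xs) y (list_encode ys)"
    using step Comp by (simp add: ys_def)
  then have "list_all2 (\<lambda>g. eval (mode_oracle md) g xs) gs ys" "eval (mode_oracle md) f ys y"
    using E1 unfolding step_ok_Comp sound_facts_def by (auto simp: list_all2_conv_all_nth)
  then show ?thesis using Comp by (blast intro: ev_comp)
next
  case (PrimRec f g)
  from step consider (zero) xs' where "xs = 0 # xs'" "E1 (eval_fact md (prog_code f) (list_encode xs') y)"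
    | (suc) n xs' where "xs = Suc n # xs'"
      "E1 (eval_fact md (prog_code (PrimRec f g)) (list_encode (n # xs')) aux)"
      "E1 (eval_fact md (prog_code g) (list_encode (n # aux # xs')) y)"
    unfolding PrimRec step_ok_PrimRec by blast
  then show ?thesis
  proof cases
    case zero
    then show ?thesis using E1 PrimRec unfolding sound_facts_def by (blast intro: ev_pr0)
  next
    case suc
    then show ?thesis using E1 PrimRec unfolding sound_facts_def by (blast intro: ev_prS)
  qed
next
  case (Mu f)
  with step E1 E2 show ?thesis
    unfolding sound_facts_def by (auto simp del: list_encode_Cons simp: step_ok_Mu intro!: ev_mu)
qed

lemma valid_cert_sound: "valid_cert es \<Longrightarrow> sound_facts (proved es)"
proof (induction es rule: rev_induct)
  case Nil
  then show ?case by (simp add: sound_facts_def proved_def)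
next
  case (snoc x es)
  then have sound: "sound_facts (proved es)" and ok: "entry_ok (proved es) (nonzero_proved es) x"
    by (simp_all add: valid_cert_snoc)
  have nonzero: "\<exists>v. v \<noteq> 0 \<and> eval (mode_oracle md) p xs v"
    if "nonzero_proved es (eval_key md (prog_code p) (list_encode xs))" for md p xs
    using that sound by (auto simp: nonzero_proved_iff sound_facts_def eval_fact_def)
  show ?case unfolding sound_facts_def
  proof (intro allI impI)
    fix md p xs y
    assume "proved (es @ [x]) (eval_fact md (prog_code p) (list_encode xs) y)"
    then consider "proved es (eval_fact md (prog_code p) (list_encode xs) y)"
      | "pfst x = eval_fact md (prog_code p) (list_encode xs) y"
      by (auto simp: proved_def)
    then show "eval (mode_oracle md) p xs y"
    proof cases
      case 1
      then show ?thesis using sound by (simp add: sound_facts_def)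
    next
      case 2
      then have "x = prod_encode (eval_fact md (prog_code p) (list_encode xs) y, psnd x)"
        by (metis prod_encode_eq_iff)
      then have "step_ok (proved es) (nonzero_proved es) md (prog_code p) (list_encode xs) y (psnd x)"
        using ok by (metis entry_ok_prod_encode)
      then show ?thesis using step_ok_sound sound nonzero by blast
    qed
  qed
qed

lemma oracle_ok_complete:
  assumes IH: "\<And>md' p xs y. md' < md \<Longrightarrow> eval (mode_oracle md') p xs y
      \<Longrightarrow> certified (eval_fact md' (prog_code p) (list_encode xs) y)"
  shows "\<exists>Js. (\<forall>J\<in>set Js. certified J) \<and> (\<forall>E. (\<forall>J\<in>set Js. E J) \<longrightarrow> oracle_ok E md x (mode_oracle md x))"
proof (cases "md \<noteq> 0 \<and> odd x \<and> (md - 1) div 2 \<noteq> 0")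
  case True
  define l where "l = (md - 1) div 2 - 1"
  have l: "2 * ((md - 1) div 2) - 1 = 2 * l + 1" "(md - 1) div 2 = Suc l" "2 * l + 1 < md"
    using True by (auto simp: l_def)
  have "eval (mode_oracle (2 * l + 1)) qS [x div 2] (mode_oracle md x)"
    using True l(2) H_Suc by (simp add: mode_oracle_odd mode_oracle_def join_def)
  then have "certified (eval_fact (2 * l + 1) (prog_code qS) (ncons (x div 2) 0) (mode_oracle md x))"
    using IH[OF l(3)] by fastforce
  then show ?thesis
    using True l(1) by (intro exI[of _ "[eval_fact (2 * l + 1) (prog_code qS) (ncons (x div 2) 0) (mode_oracle md x)]"])
      (simp add: oracle_ok_def)
next
  case False
  then have "oracle_ok E md x (mode_oracle md x)" for E
    by (auto simp: oracle_ok_def mode_oracle_def join_def H_0)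
  then show ?thesis by (intro exI[of _ "[]"]) simp
qed

lemma certified_eval: "eval (mode_oracle md) p xs y \<Longrightarrow> certified (eval_fact md (prog_code p) (list_encode xs) y)"
proof (induction md arbitrary: p xs y rule: less_induct)
  case (less md)
  from less.prems show ?case
  proof (induction rule: eval.induct)
    case (ev_zero xs)
    show ?case by (rule certified_by_step[of "[]", where aux = 0]) (simp_all add: step_ok_Zero)
  next
    case (ev_succ x xs)
    show ?case
      by (rule certified_by_step[of "[]", where aux = 0]) (auto simp del: list_encode_Cons simp: step_ok_Succ)
  next
    case (ev_proj i xs)
    then show ?case by (intro certified_by_step[of "[]", where aux = 0]) (simp_all add: step_ok_Proj)
  next
    case (ev_orc x xs)
    obtain Js where "\<forall>J\<in>set Js. certified J" "\<forall>E. (\<forall>J\<in>set Js. E J) \<longrightarrow> oracle_ok E md x (mode_oracle md x)"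
      using oracle_ok_complete less.IH by blast
    then show ?case
      by (intro certified_by_step[of Js, where aux = 0]) (auto simp del: list_encode_Cons simp: step_ok_Orc)
  next
    case (ev_comp xs gs ys f z)
    then show ?case by (intro certified_Comp) (auto simp: list_all2_conv_all_nth)
  next
    case (ev_pr0 f xs y g)
    then show ?case
      by (intro certified_by_step[of "[eval_fact md (prog_code f) (list_encode xs) y]", where aux = 0])
        (auto simp del: list_encode_Cons simp: step_ok_PrimRec)
  next
    case (ev_prS f g n xs r y)
    then show ?case
      by (intro certified_by_step[of "[eval_fact md (prog_code (PrimRec f g)) (list_encode (n # xs)) r,
          eval_fact md (prog_code g) (list_encode (n # r # xs)) y]", where aux = r])
        (auto simp del: list_encode_Cons simp: step_ok_PrimRec)
  next
    case (ev_mu f y xs)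
    then show ?case by (intro certified_Mu) blast+
  qed
qed

theorem certified_iff:
  "certified (eval_fact md (prog_code p) (list_encode xs) y) \<longleftrightarrow> eval (mode_oracle md) p xs y"
proof
  assume "certified (eval_fact md (prog_code p) (list_encode xs) y)"
  then obtain es where "valid_cert es" "proved es (eval_fact md (prog_code p) (list_encode xs) y)"
    by (auto simp: certified_iff_valid_cert)
  then show "eval (mode_oracle md) p xs y"
    using valid_cert_sound unfolding sound_facts_def by blast
qed (rule certified_eval)

theorem certified_key_iff:
  "certified_key (eval_key md (prog_code p) (list_encode xs)) \<longleftrightarrow> (\<exists>y. eval (mode_oracle md) p xs y)"
proof
  assume "certified_key (eval_key md (prog_code p) (list_encode xs))"
  then obtain es x where es: "valid_cert es" "x \<in> set es"
    and x: "pfst (pfst x) = eval_key md (prog_code p) (list_encode xs)"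
    by (auto simp: certified_key_iff_valid_cert)
  then have "proved es (eval_fact md (prog_code p) (list_encode xs) (psnd (pfst x)))"
    unfolding proved_def eval_fact_def by (metis prod_encode_eq_iff)
  then have "eval (mode_oracle md) p xs (psnd (pfst x))"
    using valid_cert_sound[OF es(1)] unfolding sound_facts_def by blast
  then show "\<exists>y. eval (mode_oracle md) p xs y" ..
next
  assume "\<exists>y. eval (mode_oracle md) p xs y"
  then obtain y where "certified (eval_fact md (prog_code p) (list_encode xs) y)"
    using certified_eval by blast
  then show "certified_key (eval_key md (prog_code p) (list_encode xs))"
    unfolding certified_iff_valid_cert certified_key_iff_valid_cert proved_def eval_fact_def
    by (metis pfst_prod_encode)
qed

lemma ce_tower_halting:
  assumes "fS \<in> K2eff" "fP \<in> K2eff" "h0 \<in> K2eff"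
  shows "{l. eval (join fP (H l)) q [n] y} \<in> ce_sets"
proof -
  have "computable 1 (\<lambda>e. eval_fact (2 * e 0 + 2) (prog_code q) (ncons n 0) y)"
    unfolding eval_fact_def eval_key_def
    by (intro computable_prod_encode computable_ncons computable_intros) simp_all
  from ce_certified[OF assms this]
  have "{l. certified (eval_fact (2 * l + 2) (prog_code q) (ncons n 0) y)} \<in> ce_sets" .
  moreover have "certified (eval_fact (2 * l + 2) (prog_code q) (ncons n 0) y)
      \<longleftrightarrow> eval (join fP (H l)) q [n] y" for l
    using certified_iff[of "2 * l + 2" q "[n]" y] unfolding mode_oracle_even by simp
  ultimately show ?thesis by simp
qed

end


section \<open>Normal form of c.e. sets and a c.e. set with non-c.e. complement\<close>

lemma const_0_K2eff: "(\<lambda>_. 0) \<in> K2eff"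
  unfolding K2eff_def by (blast intro: ev_zero)

interpretation trivial_tower: oracle_tower "\<lambda>_. 0" "\<lambda>_. 0" "\<lambda>_. 0" Zero "\<lambda>_ _. 0"
  by unfold_locales (auto intro: ev_zero)

lemma ce_sets_normal_form:
  assumes "A \<in> ce_sets"
  obtains Q where "computable 2 (\<lambda>e. of_bool (Q (e 0) (e 1)))" and "A = {x. \<exists>c. Q c x}"
proof -
  obtain p where p: "A = {x. \<exists>y. eval (\<lambda>_. 0) p [x] y}"
    using assms by (auto simp: ce_sets_def)
  define Q where "Q c x \<longleftrightarrow> trivial_tower.valid_code c \<and>
    trivial_tower.proves_key_code c (eval_key 0 (prog_code p) (ncons x 0))" for c x
  have "computable 2 (\<lambda>e. eval_key 0 (prog_code p) (ncons (e 1) 0))"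
    unfolding eval_key_def by (intro computable_prod_encode computable_ncons computable_intros) simp_all
  then have "computable 2 (\<lambda>e. of_bool (Q (e 0) (e 1)))"
    unfolding Q_def
    by (intro computable_conj trivial_tower.computable_valid_code trivial_tower.computable_proves_key_code
        const_0_K2eff computable_proj) simp_all
  moreover have "A = {x. \<exists>c. Q c x}"
    using trivial_tower.certified_key_iff[of 0 p "[_]"]
    by (auto simp: p Q_def trivial_tower.certified_key_def trivial_tower.mode_oracle_0)
  ultimately show thesis by (rule that)
qed

lemma ce_sets_image:
  assumes "A \<in> ce_sets" "computable 1 (\<lambda>e. g (e 0))"
  shows "g ` A \<in> ce_sets"
proof -
  obtain Q where Q: "computable 2 (\<lambda>e. of_bool (Q (e 0) (e 1)))" and A: "A = {x. \<exists>c. Q c x}"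
    using ce_sets_normal_form[OF assms(1)] by blast
  have "g ` A = {x. \<exists>c. \<exists>a<Suc c. \<exists>b<Suc c. x = g a \<and> Q b a}"
  proof (intro set_eqI iffI)
    fix x assume "x \<in> g ` A"
    then obtain a b where "x = g a" "Q b a" using A by blast
    moreover have "a < Suc (max a b)" "b < Suc (max a b)" by auto
    ultimately show "x \<in> {x. \<exists>c. \<exists>a<Suc c. \<exists>b<Suc c. x = g a \<and> Q b a}" by blast
  qed (use A in auto)
  moreover have "computable 4 (\<lambda>e. of_bool (Q (e 0) (e 1)))"
    using computable_reindex[OF Q, of id] by simp
  then have "computable 2 (\<lambda>e. of_bool (\<exists>a<Suc (e 0). \<exists>b<Suc (e 0). e 1 = g a \<and> Q b a))"
    by (intro computable_intros computable_unary[OF assms(2)]; simp)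
  ultimately show ?thesis using ce_sets_Collect_ex by simp
qed

theorem ce_set_with_non_ce_complement: "\<exists>W\<in>ce_sets. - W \<notin> ce_sets"
proof -
  define W where "W = {e. trivial_tower.certified_key (eval_key 0 e (ncons e 0))}"
  have "computable 1 (\<lambda>e. eval_key 0 (e 0) (ncons (e 0) 0))"
    unfolding eval_key_def by (intro computable_prod_encode computable_ncons computable_intros) simp_all
  then have "W \<in> ce_sets"
    unfolding W_def by (intro trivial_tower.ce_certified_key const_0_K2eff)
  moreover have "- W \<notin> ce_sets"
  proof
    assume "- W \<in> ce_sets"
    then obtain p where p: "- W = {x. \<exists>y. eval (\<lambda>_. 0) p [x] y}"
      by (auto simp: ce_sets_def)
    have "prog_code p \<in> W \<longleftrightarrow> (\<exists>y. eval (\<lambda>_. 0) p [prog_code p] y)"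
      using trivial_tower.certified_key_iff[of 0 p "[prog_code p]"]
      by (simp add: W_def trivial_tower.mode_oracle_0)
    then show False using p by blast
  qed
  ultimately show ?thesis by blast
qed

lemma Dcan_power_of_2 [simp]: "Dcan (2 ^ e) = {e}"
  by (auto simp: Dcan_def bit_exp_iff)

definition succ_set :: "nat set" where
  "succ_set = {prod_encode (Suc l, 2 ^ l) | l. True}"

definition member_test :: "nat set \<Rightarrow> nat set" where
  "member_test W = (\<lambda>d. prod_encode (0, 2 ^ d)) ` W"

lemma succ_set_ce: "succ_set \<in> ce_sets"
  unfolding succ_set_def
  by (rule ce_sets_Collect_ex) (intro computable_intros computable_prod_encode computable_pow2; simp)

lemma member_test_ce: "W \<in> ce_sets \<Longrightarrow> member_test W \<in> ce_sets"
  unfolding member_test_def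
  by (erule ce_sets_image) (intro computable_intros computable_prod_encode computable_pow2; simp)

lemma E_app_succ_set: "E_app succ_set {l} = {Suc l}"
  unfolding E_app_def succ_set_def by auto

lemma E_app_member_test: "E_app (member_test W) {d} = (if d \<in> W then {0} else {})"
  unfolding E_app_def member_test_def by auto

lemma embeds_E_K2eff_app:
  assumes "embeds_E_K2eff f" "A \<in> ce_sets" "B \<in> ce_sets" "E_app A B \<in> ce_sets"
  shows "eval (join (f A) (f B)) (from_nat (f A 0)) [n] (f (E_app A B) n)"
  using assms unfolding embeds_E_K2eff_def K2app_def Phi_def by blast

lemma embeds_E_K2eff_tower:
  assumes "embeds_E_K2eff f"
  shows "oracle_tower (f succ_set) (f {0}) (from_nat (f succ_set 0)) (\<lambda>l. f {l})"
  using embeds_E_K2eff_app[OF assms succ_set_ce ce_sets_singleton] E_app_succ_set ce_sets_singleton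
  by unfold_locales auto

theorem embeds_E_K2eff_app_singleton_ce:
  assumes "embeds_E_K2eff f" "A \<in> ce_sets"
  shows "{d. eval (join (f A) (f {d})) (from_nat (f A 0)) [n] y} \<in> ce_sets"
proof -
  interpret oracle_tower "f succ_set" "f A" "f {0}" "from_nat (f succ_set 0)" "\<lambda>l. f {l}"
    by (rule embeds_E_K2eff_tower[OF assms(1)])
  have "f B \<in> K2eff" if "B \<in> ce_sets" for B
    using assms(1) that unfolding embeds_E_K2eff_def by blast
  then show ?thesis by (intro ce_tower_halting) (simp_all add: succ_set_ce assms(2) ce_sets_singleton)
qed

theorem corollary7p14:
  shows "\<not> (\<exists>f. embeds_E_K2eff f)"
proof
  assume "\<exists>f. embeds_E_K2eff f"
  then obtain f where f: "embeds_E_K2eff f" ..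
  obtain W where W: "W \<in> ce_sets" "- W \<notin> ce_sets"
    using ce_set_with_non_ce_complement by blast
  let ?P = "member_test W"
  have P: "?P \<in> ce_sets" using W(1) by (rule member_test_ce)
  have "f {0} \<noteq> f {}"
    using f ce_sets_singleton ce_sets_empty unfolding embeds_E_K2eff_def inj_on_def by blast
  then obtain k where k: "f {0} k \<noteq> f {} k" by (auto simp: fun_eq_iff)
  let ?halts = "{d. eval (join (f ?P) (f {d})) (from_nat (f ?P 0)) [k] (f {} k)}"
  have "d \<in> ?halts \<longleftrightarrow> f (E_app ?P {d}) k = f {} k" for d
  proof -
    have "eval (join (f ?P) (f {d})) (from_nat (f ?P 0)) [k] (f (E_app ?P {d}) k)"
      by (rule embeds_E_K2eff_app[OF f P ce_sets_singleton])
        (simp add: E_app_member_test ce_sets_singleton ce_sets_empty)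
    then show ?thesis using eval_det by (metis mem_Collect_eq)
  qed
  then have "?halts = - W" using k by (auto simp: E_app_member_test)
  moreover have "?halts \<in> ce_sets" by (rule embeds_E_K2eff_app_singleton_ce[OF f P])
  ultimately show False using W(2) by simp
qed

end
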